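(* In the dual access model, any $(\varepsilon_1,\varepsilon_2)$-tolerant testing algorithm for uniformity over $[n]$ requires sample (query) complexity $\Omega\!\left(\frac{1}{(\varepsilon_2-\varepsilon_1)^2}\right)$; this lower bound holds even when $\varepsilon_1$ is required to be $\Omega(1)$.
   Context: Distributions are over $[n]=\{1,\dots,n\}$; $\mathcal{U}_n$ denotes the uniform distribution on $[n]$; $d_{TV}(D_1,D_2)=\frac12\sum_{i\in[n]}|D_1(i)-D_2(i)|$. In the dual access model, an algorithm accesses an unknown distribution $D$ via a sampling oracle $\mathsf{SAMP}_D$ (returns $i\in[n]$ with probability $D(i)$, independently of all previous calls) and an evaluation oracle $\mathsf{EVAL}_D$ (on query $j\in[n]$ returns $D(j)$); each call counts as one query. An $(\varepsilon_1,\varepsilon_2)$-tolerant tester for uniformity, for $0\le\varepsilon_1<\varepsilon_2\le1$, outputs ACCEPT with probability at least $2/3$ if $d_{TV}(D,\mathcal{U}_n)\le\varepsilon_1$ and REJECT with probability at least $2/3$ if $d_{TV}(D,\mathcal{U}_n)\ge\varepsilon_2$. *)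

theory Defs
  imports "HOL-Probability.Probability"
begin

definition is_dist_on :: "nat \<Rightarrow> nat pmf \<Rightarrow> bool" where
  "is_dist_on n D \<longleftrightarrow> set_pmf D \<subseteq> {1..n}"

definition unif :: "nat \<Rightarrow> nat pmf" where
  "unif n = pmf_of_set {1..n}"

definition dtv :: "nat \<Rightarrow> nat pmf \<Rightarrow> nat pmf \<Rightarrow> real" where
  "dtv n D1 D2 = (1/2) * (\<Sum>i\<in>{1..n}. \<bar>pmf D1 i - pmf D2 i\<bar>)"

datatype query = Samp | Eval nat

datatype answer = SampAns nat | EvalAns real

type_synonym history = "(query \<times> answer) list"

text \<open>A (randomized, adaptive) algorithm: given the history of query/answer
pairs so far, it randomly chooses the next query; after the query budget is
exhausted it randomly decides (True = ACCEPT, False = REJECT).\<close>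
record algorithm =
  next_query :: "history \<Rightarrow> query pmf"
  decide :: "history \<Rightarrow> bool pmf"

fun run :: "nat pmf \<Rightarrow> algorithm \<Rightarrow> nat \<Rightarrow> history \<Rightarrow> bool pmf" where
  "run D A 0 h = decide A h"
| "run D A (Suc k) h =
     bind_pmf (next_query A h) (\<lambda>qu. case qu of
        Samp \<Rightarrow> bind_pmf D (\<lambda>i. run D A k (h @ [(Samp, SampAns i)]))
      | Eval j \<Rightarrow> run D A k (h @ [(Eval j, EvalAns (pmf D j))]))"

definition accept_prob :: "algorithm \<Rightarrow> nat \<Rightarrow> nat pmf \<Rightarrow> real" where
  "accept_prob A q D = pmf (run D A q []) True"

definition tolerant_unif_tester ::
  "algorithm \<Rightarrow> nat \<Rightarrow> nat \<Rightarrow> real \<Rightarrow> real \<Rightarrow> bool" where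
  "tolerant_unif_tester A q n eps1 eps2 \<longleftrightarrow>
     (\<forall>D. is_dist_on n D \<longrightarrow>
        (dtv n D (unif n) \<le> eps1 \<longrightarrow> accept_prob A q D \<ge> 2/3) \<and>
        (dtv n D (unif n) \<ge> eps2 \<longrightarrow> 1 - accept_prob A q D \<ge> 2/3))"

end

theory Submission
  imports Defs
begin

text \<open>Coin \<open>j\<close> of \<open>\<theta> \<in> {0,1}\<^sup>n\<^sup>/\<^sup>2\<close> decides whether the mass of the point \<open>2j+2\<close> is moved
  onto \<open>2j+1\<close>, so the resulting distribution \<open>D\<^sub>\<theta>\<close> has distance \<open>heads(\<theta>)/n\<close> from uniform.
  With coins of bias \<open>p\<^sub>1\<close> resp. \<open>p\<^sub>2\<close>, Hoeffding puts \<open>D\<^sub>\<theta>\<close> within \<open>\<epsilon>\<^sub>1\<close> resp. beyond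
  \<open>\<epsilon>\<^sub>2\<close> with probability at least \<open>7/8\<close> once \<open>n\<delta>\<^sup>2 \<ge> 1\<close> (\<open>\<delta> = \<epsilon>\<^sub>2 - \<epsilon>\<^sub>1\<close>), so the
  average acceptance probability of a tolerant tester differs by at least \<open>1/8\<close> under the two
  coin laws. On the other hand every SAMP or EVAL answer depends on a single coin. The pointwise
  bound \<open>|w\<^sub>1 - w\<^sub>2| \<le> (w\<^sub>1 - w\<^sub>2)\<^sup>2/(2t w\<^sub>2) + t w\<^sub>2/2\<close> turns the distinguishing advantage into
  a \<open>\<chi>\<^sup>2\<close>-sum, which grows by the factor \<open>1 + \<chi>\<^sup>2(p\<^sub>1 \<parallel> p\<^sub>2) = 1 + O(\<delta>\<^sup>2)\<close> per revealed coin.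
  So \<open>q\<close> queries give advantage at most \<open>((1 + O(\<delta>\<^sup>2))\<^sup>q - 1)/(2t) + t/2\<close>, which is below
  \<open>1/8\<close> unless \<open>q = \<Omega>(1/\<delta>\<^sup>2)\<close>.\<close>

definition depends_on :: "((nat \<Rightarrow> bool) \<Rightarrow> 'a) \<Rightarrow> nat set \<Rightarrow> bool" where
  "depends_on L T \<longleftrightarrow> (\<forall>\<theta> \<theta>'. (\<forall>j\<in>T. \<theta> j = \<theta>' j) \<longrightarrow> L \<theta> = L \<theta>')"

lemma depends_onD: "depends_on L T \<Longrightarrow> (\<And>j. j \<in> T \<Longrightarrow> \<theta> j = \<theta>' j) \<Longrightarrow> L \<theta> = L \<theta>'"
  unfolding depends_on_def by blast

lemma depends_on_mult:
  "depends_on L T \<Longrightarrow> depends_on l C \<Longrightarrow> depends_on (\<lambda>\<theta>. L \<theta> * l \<theta>) (T \<union> C)"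
  unfolding depends_on_def by (metis UnCI)

definition coins :: "nat set \<Rightarrow> real \<Rightarrow> (nat \<Rightarrow> bool) pmf" where
  "coins T p = Pi_pmf T False (\<lambda>_. bernoulli_pmf p)"

abbreviation coins_exp :: "nat set \<Rightarrow> real \<Rightarrow> ((nat \<Rightarrow> bool) \<Rightarrow> real) \<Rightarrow> real" where
  "coins_exp T p F \<equiv> measure_pmf.expectation (coins T p) F"

lemma set_pmf_coins: "finite T \<Longrightarrow> set_pmf (coins T p) \<subseteq> PiE_dflt T False (\<lambda>_. UNIV)"
  unfolding coins_def using set_Pi_pmf_subset'[of T False] by (auto simp: PiE_dflt_def)

lemma finite_set_pmf_coins: "finite T \<Longrightarrow> finite (set_pmf (coins T p))"
  by (rule finite_subset[OF set_pmf_coins finite_PiE_dflt]) auto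

lemma integrable_coins [simp]: "finite T \<Longrightarrow> integrable (measure_pmf (coins T p)) (f :: _ \<Rightarrow> real)"
  by (intro integrable_measure_pmf_finite finite_set_pmf_coins)

lemma coins_exp_eq_sum:
  "finite T \<Longrightarrow> coins_exp T p F = (\<Sum>\<theta>\<in>PiE_dflt T False (\<lambda>_. UNIV). pmf (coins T p) \<theta> * F \<theta>)"
  by (subst integral_measure_pmf_real[where A = "PiE_dflt T False (\<lambda>_. UNIV)"])
     (use set_pmf_coins finite_PiE_dflt in \<open>auto simp: mult.commute\<close>)

lemma pmf_coins:
  "finite T \<Longrightarrow> \<theta> \<in> PiE_dflt T False (\<lambda>_. UNIV) \<Longrightarrow>
     pmf (coins T p) \<theta> = (\<Prod>j\<in>T. pmf (bernoulli_pmf p) (\<theta> j))"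
  unfolding coins_def by (subst pmf_Pi) (auto simp: PiE_dflt_def)

lemma coins_exp_marginal:
  assumes "finite U" "T \<subseteq> U" "depends_on L T"
  shows "coins_exp U p L = coins_exp T p L"
proof -
  have "coins T p = map_pmf (\<lambda>\<theta> j. if j \<in> T then \<theta> j else False) (coins U p)"
    unfolding coins_def by (rule Pi_pmf_subset[OF assms(1,2)])
  moreover have "L (\<lambda>j. if j \<in> T then \<theta> j else False) = L \<theta>" for \<theta>
    by (rule depends_onD[OF assms(3)]) simp
  ultimately show ?thesis by simp
qed

lemma coins_exp_abs_mult_le:
  assumes "finite T" "\<And>\<theta>. L \<theta> \<ge> 0" "\<And>\<theta>. \<bar>G \<theta>\<bar> \<le> 1"
  shows "\<bar>coins_exp T p (\<lambda>\<theta>. L \<theta> * G \<theta>)\<bar> \<le> coins_exp T p L"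
proof -
  have "\<bar>L \<theta> * G \<theta>\<bar> \<le> L \<theta>" for \<theta>
    using assms(2,3)[of \<theta>] by (simp add: abs_mult mult_left_le)
  then have "coins_exp T p (\<lambda>\<theta>. \<bar>L \<theta> * G \<theta>\<bar>) \<le> coins_exp T p L"
    using assms(1) by (intro integral_mono) auto
  then show ?thesis
    by (rule order_trans[OF integral_abs_bound])
qed

lemma coins_exp_integral_swap:
  assumes "finite T" and "\<And>\<theta> y. \<bar>G \<theta> y\<bar> \<le> 1"
  shows "coins_exp T p (\<lambda>\<theta>. L \<theta> * (\<integral>y. G \<theta> y \<partial>measure_pmf M))
       = (\<integral>y. coins_exp T p (\<lambda>\<theta>. L \<theta> * G \<theta> y) \<partial>measure_pmf M)"
proof -
  have "integrable (measure_pmf M) (\<lambda>y. pmf (coins T p) \<theta> * (L \<theta> * G \<theta> y))" for \<theta>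
    by (intro integrable_mult_right measure_pmf.integrable_const_bound[where B = 1])
       (auto intro: assms(2))
  then show ?thesis
    using assms(1) by (simp add: coins_exp_eq_sum Bochner_Integration.integral_sum[symmetric])
qed

text \<open>\<open>chi2_factor p1 p2 = 1 + \<chi>\<^sup>2(Ber(p\<^sub>1) \<parallel> Ber(p\<^sub>2))\<close>.\<close>
definition chi2_factor :: "real \<Rightarrow> real \<Rightarrow> real" where
  "chi2_factor p1 p2 = (1 - p1)^2 / (1 - p2) + p1^2 / p2"

definition tilted_prob :: "real \<Rightarrow> real \<Rightarrow> real" where
  "tilted_prob p1 p2 = p1^2 / (p2 * chi2_factor p1 p2)"

lemma chi2_factor_eq:
  "0 < p2 \<Longrightarrow> p2 < 1 \<Longrightarrow> chi2_factor p1 p2 = 1 + (p1 - p2)^2 / (p2 * (1 - p2))"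
  unfolding chi2_factor_def by (simp add: field_simps power2_eq_square)

lemma chi2_factor_ge_1: "0 < p2 \<Longrightarrow> p2 < 1 \<Longrightarrow> chi2_factor p1 p2 \<ge> 1"
  by (simp add: chi2_factor_eq)

lemma tilted_prob_nonneg: "0 < p2 \<Longrightarrow> p2 < 1 \<Longrightarrow> 0 \<le> tilted_prob p1 p2"
  using chi2_factor_ge_1[of p2 p1] by (simp add: tilted_prob_def)

lemma tilted_prob_le_1:
  assumes "0 < p2" "p2 < 1"
  shows "tilted_prob p1 p2 \<le> 1"
proof -
  have "p1^2 / p2 \<le> chi2_factor p1 p2"
    unfolding chi2_factor_def using assms by simp
  then show ?thesis
    using assms chi2_factor_ge_1[OF assms, of p1]
    by (simp add: tilted_prob_def divide_le_eq mult.commute)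
qed

lemma bernoulli_sq_ratio:
  assumes "0 \<le> p1" "p1 \<le> 1" "0 < p2" "p2 < 1"
  shows "pmf (bernoulli_pmf p1) b ^ 2 / pmf (bernoulli_pmf p2) b
       = chi2_factor p1 p2 * pmf (bernoulli_pmf (tilted_prob p1 p2)) b"
proof -
  let ?K = "chi2_factor p1 p2" and ?r = "tilted_prob p1 p2"
  have K: "?K \<ge> 1" and r: "0 \<le> ?r" "?r \<le> 1"
    using assms chi2_factor_ge_1 tilted_prob_nonneg tilted_prob_le_1 by auto
  have "?K * (1 - ?r) = ?K - p1^2 / p2"
    using K assms(3) by (simp add: tilted_prob_def field_simps)
  also have "\<dots> = (1 - p1)^2 / (1 - p2)"
    by (simp add: chi2_factor_def)
  finally have "?K * (1 - ?r) = (1 - p1)^2 / (1 - p2)" .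
  with K r assms show ?thesis
    by (cases b) (simp_all add: tilted_prob_def)
qed

lemma abs_diff_le_amgm:
  fixes w1 w2 t :: real
  assumes "w2 > 0" "t > 0"
  shows "\<bar>w1 - w2\<bar> \<le> (w1^2 / w2 - 2 * w1 + w2) / (2 * t) + t * w2 / 2"
proof -
  define x where "x = w1 - w2"
  have "w1^2 / w2 - 2 * w1 + w2 = x^2 / w2"
    unfolding x_def using assms by (simp add: field_simps power2_eq_square)
  moreover have "0 \<le> (\<bar>x\<bar> - t * w2)^2"
    by simp
  then have "2 * t * w2 * \<bar>x\<bar> \<le> x^2 + (t * w2)^2"
    by (simp add: power2_eq_square algebra_simps)
  then have "\<bar>x\<bar> \<le> x^2 / w2 / (2 * t) + t * w2 / 2"
    using assms by (simp add: field_simps power2_eq_square)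
  ultimately show ?thesis
    unfolding x_def by simp
qed

text \<open>For \<open>k = card U\<close> the numerator of the first summand is the \<open>L\<close>-weighted
  \<open>\<chi>\<^sup>2\<close>-sum \<open>\<Sum>\<theta>. (w\<^sub>1 \<theta> - w\<^sub>2 \<theta>)\<^sup>2 / w\<^sub>2 \<theta> * L \<theta>\<close> of the two coin laws;
  raising the exponent \<open>k\<close> pays for coordinates revealed by further queries.\<close>
definition adv_bound ::
  "nat set \<Rightarrow> real \<Rightarrow> real \<Rightarrow> real \<Rightarrow> nat \<Rightarrow> ((nat \<Rightarrow> bool) \<Rightarrow> real) \<Rightarrow> real" where
  "adv_bound U p1 p2 t k L =
     (chi2_factor p1 p2 ^ k * coins_exp U (tilted_prob p1 p2) L
        - 2 * coins_exp U p1 L + coins_exp U p2 L) / (2 * t) + t / 2 * coins_exp U p2 L"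

lemma adv_bound_marginal:
  "finite U \<Longrightarrow> T \<subseteq> U \<Longrightarrow> depends_on L T \<Longrightarrow> adv_bound U p1 p2 t k L = adv_bound T p1 p2 t k L"
  by (simp add: adv_bound_def coins_exp_marginal)

lemma adv_bound_mono:
  assumes "finite U" "0 < p2" "p2 < 1" "t > 0" "\<And>\<theta>. L \<theta> \<ge> 0" "k \<le> k'"
  shows "adv_bound U p1 p2 t k L \<le> adv_bound U p1 p2 t k' L"
proof -
  have "chi2_factor p1 p2 ^ k \<le> chi2_factor p1 p2 ^ k'"
    using assms chi2_factor_ge_1 by (intro power_increasing) auto
  moreover have "coins_exp U (tilted_prob p1 p2) L \<ge> 0"
    using assms(5) by (intro Bochner_Integration.integral_nonneg) auto
  ultimately show ?thesis
    using assms(4) by (simp add: adv_bound_def divide_right_mono mult_right_mono)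
qed

lemma adv_bound_mixture:
  assumes "finite U" "finite X" "\<And>\<theta>. (\<Sum>x\<in>X. l x \<theta>) = 1"
  shows "(\<Sum>x\<in>X. adv_bound U p1 p2 t k (\<lambda>\<theta>. L \<theta> * l x \<theta>)) = adv_bound U p1 p2 t k L"
proof -
  have "(\<Sum>x\<in>X. coins_exp U p (\<lambda>\<theta>. L \<theta> * l x \<theta>)) = coins_exp U p L" for p
    using assms
    by (simp add: Bochner_Integration.integral_sum[symmetric] sum_distrib_left[symmetric])
  then show ?thesis
    by (simp add: adv_bound_def sum.distrib sum_subtractf sum_divide_distrib[symmetric]
        sum_distrib_left[symmetric])
qed

lemma abs_coins_exp_diff_le:
  assumes T: "finite T" and L: "\<And>\<theta>. L \<theta> \<ge> 0"
    and p: "0 \<le> p1" "p1 \<le> 1" "0 < p2" "p2 < 1" and t: "t > 0"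
  shows "\<bar>coins_exp T p1 L - coins_exp T p2 L\<bar> \<le> adv_bound T p1 p2 t (card T) L"
proof -
  let ?S = "PiE_dflt T False (\<lambda>_. UNIV)"
  define w1 w2 w3 where "w1 = pmf (coins T p1)" "w2 = pmf (coins T p2)"
    "w3 = pmf (coins T (tilted_prob p1 p2))"
  define c where "c = chi2_factor p1 p2 ^ card T"
  have bernoulli_pos: "pmf (bernoulli_pmf p2) b > 0" for b
    using p by (cases b) simp_all
  have pointwise: "\<bar>w1 \<theta> - w2 \<theta>\<bar> * L \<theta>
      \<le> ((c * w3 \<theta> - 2 * w1 \<theta> + w2 \<theta>) / (2 * t) + t * w2 \<theta> / 2) * L \<theta>"
    if \<theta>: "\<theta> \<in> ?S" for \<theta>
  proof -
    have "w1 \<theta>^2 / w2 \<theta>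
        = (\<Prod>j\<in>T. pmf (bernoulli_pmf p1) (\<theta> j) ^ 2 / pmf (bernoulli_pmf p2) (\<theta> j))"
      unfolding w1_w2_w3_def pmf_coins[OF T \<theta>] by (simp add: prod_power_distrib prod_dividef)
    also have "\<dots> = c * w3 \<theta>"
      unfolding c_def w1_w2_w3_def pmf_coins[OF T \<theta>] bernoulli_sq_ratio[OF p]
      by (simp add: prod.distrib)
    finally have "w1 \<theta>^2 / w2 \<theta> = c * w3 \<theta>" .
    moreover have "w2 \<theta> > 0"
      unfolding w1_w2_w3_def pmf_coins[OF T \<theta>] using p by (intro prod_pos bernoulli_pos)
    ultimately show ?thesis
      using abs_diff_le_amgm[of "w2 \<theta>" t "w1 \<theta>"] t L[of \<theta>] by (intro mult_right_mono) auto
  qed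
  have "\<bar>coins_exp T p1 L - coins_exp T p2 L\<bar> \<le> (\<Sum>\<theta>\<in>?S. \<bar>w1 \<theta> - w2 \<theta>\<bar> * L \<theta>)"
    unfolding coins_exp_eq_sum[OF T] w1_w2_w3_def sum_subtractf[symmetric]
    by (rule order_trans[OF sum_abs]) (simp add: abs_mult L left_diff_distrib[symmetric])
  also have "\<dots> \<le> (\<Sum>\<theta>\<in>?S. ((c * w3 \<theta> - 2 * w1 \<theta> + w2 \<theta>) / (2 * t) + t * w2 \<theta> / 2) * L \<theta>)"
    by (rule sum_mono) (rule pointwise)
  also have "\<dots> = (\<Sum>\<theta>\<in>?S. (c * (w3 \<theta> * L \<theta>) - 2 * (w1 \<theta> * L \<theta>) + w2 \<theta> * L \<theta>) / (2 * t)
      + t / 2 * (w2 \<theta> * L \<theta>))"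
    by (intro sum.cong refl) (simp add: field_simps)
  also have "\<dots> = adv_bound T p1 p2 t (card T) L"
    unfolding adv_bound_def coins_exp_eq_sum[OF T] w1_w2_w3_def c_def
    by (simp add: sum.distrib sum_subtractf sum_divide_distrib[symmetric] sum_distrib_left)
  finally show ?thesis .
qed

lemma abs_coins_exp_diff_mixture_le:
  assumes U: "finite U" and X: "finite X" and L: "\<And>\<theta>. L \<theta> \<ge> 0"
    and l: "\<And>x \<theta>. l x \<theta> \<ge> 0" "\<And>\<theta>. (\<Sum>x\<in>X. l x \<theta>) = 1"
    and p: "0 < p2" "p2 < 1" "t > 0" and k: "\<And>x. x \<in> X \<Longrightarrow> k x \<le> k'"
    and each: "\<And>x. x \<in> X \<Longrightarrow>
      \<bar>coins_exp U p1 (\<lambda>\<theta>. L \<theta> * l x \<theta> * H x \<theta>) - coins_exp U p2 (\<lambda>\<theta>. L \<theta> * l x \<theta> * H x \<theta>)\<bar>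
        \<le> adv_bound U p1 p2 t (k x) (\<lambda>\<theta>. L \<theta> * l x \<theta>)"
  shows "\<bar>coins_exp U p1 (\<lambda>\<theta>. L \<theta> * (\<Sum>x\<in>X. l x \<theta> * H x \<theta>))
          - coins_exp U p2 (\<lambda>\<theta>. L \<theta> * (\<Sum>x\<in>X. l x \<theta> * H x \<theta>))\<bar> \<le> adv_bound U p1 p2 t k' L"
proof -
  have expand: "coins_exp U p (\<lambda>\<theta>. L \<theta> * (\<Sum>x\<in>X. l x \<theta> * H x \<theta>))
      = (\<Sum>x\<in>X. coins_exp U p (\<lambda>\<theta>. L \<theta> * l x \<theta> * H x \<theta>))" for p
  proof -
    have "(\<lambda>\<theta>. L \<theta> * (\<Sum>x\<in>X. l x \<theta> * H x \<theta>)) = (\<lambda>\<theta>. \<Sum>x\<in>X. L \<theta> * l x \<theta> * H x \<theta>)"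
      by (simp add: sum_distrib_left mult.assoc)
    then show ?thesis
      using U by (simp add: Bochner_Integration.integral_sum)
  qed
  have "\<bar>\<Sum>x\<in>X. coins_exp U p1 (\<lambda>\<theta>. L \<theta> * l x \<theta> * H x \<theta>) - coins_exp U p2 (\<lambda>\<theta>. L \<theta> * l x \<theta> * H x \<theta>)\<bar>
      \<le> (\<Sum>x\<in>X. adv_bound U p1 p2 t (k x) (\<lambda>\<theta>. L \<theta> * l x \<theta>))"
    by (rule order_trans[OF sum_abs]) (intro sum_mono each)
  also have "\<dots> \<le> (\<Sum>x\<in>X. adv_bound U p1 p2 t k' (\<lambda>\<theta>. L \<theta> * l x \<theta>))"
    by (intro sum_mono adv_bound_mono U p k) (simp add: L l(1))
  also have "\<dots> = adv_bound U p1 p2 t k' L"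
    by (rule adv_bound_mixture[OF U X l(2)])
  finally show ?thesis
    unfolding expand sum_subtractf .
qed

lemma abs_coins_exp_diff_integral_le:
  assumes U: "finite U" and L: "\<And>\<theta>. L \<theta> \<ge> 0" and G: "\<And>\<theta> y. \<bar>G \<theta> y\<bar> \<le> 1"
    and each: "\<And>y. \<bar>coins_exp U p1 (\<lambda>\<theta>. L \<theta> * G \<theta> y) - coins_exp U p2 (\<lambda>\<theta>. L \<theta> * G \<theta> y)\<bar> \<le> B"
  shows "\<bar>coins_exp U p1 (\<lambda>\<theta>. L \<theta> * (\<integral>y. G \<theta> y \<partial>measure_pmf M))
          - coins_exp U p2 (\<lambda>\<theta>. L \<theta> * (\<integral>y. G \<theta> y \<partial>measure_pmf M))\<bar> \<le> B"
proof -
  have int: "integrable (measure_pmf M) (\<lambda>y. coins_exp U p (\<lambda>\<theta>. L \<theta> * G \<theta> y))" for p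
    by (rule measure_pmf.integrable_const_bound[where B = "coins_exp U p L"])
       (simp_all add: coins_exp_abs_mult_le[OF U L G])
  have "coins_exp U p1 (\<lambda>\<theta>. L \<theta> * (\<integral>y. G \<theta> y \<partial>measure_pmf M))
      - coins_exp U p2 (\<lambda>\<theta>. L \<theta> * (\<integral>y. G \<theta> y \<partial>measure_pmf M))
    = (\<integral>y. coins_exp U p1 (\<lambda>\<theta>. L \<theta> * G \<theta> y) - coins_exp U p2 (\<lambda>\<theta>. L \<theta> * G \<theta> y) \<partial>measure_pmf M)"
    unfolding coins_exp_integral_swap[OF U G]
    by (rule Bochner_Integration.integral_diff[OF int int, symmetric])
  also have "\<bar>\<dots>\<bar> \<le> B"
    using each by (intro order_trans[OF integral_abs_bound] measure_pmf.integral_le_const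
        integrable_abs Bochner_Integration.integrable_diff int) simp_all
  finally show ?thesis .
qed

definition answer_pmf :: "nat pmf \<Rightarrow> query \<Rightarrow> answer pmf" where
  "answer_pmf D qu =
     (case qu of Samp \<Rightarrow> map_pmf SampAns D | Eval j \<Rightarrow> return_pmf (EvalAns (pmf D j)))"

lemma run_Suc_answer_pmf:
  "run D A (Suc k) h =
     next_query A h \<bind> (\<lambda>qu. answer_pmf D qu \<bind> (\<lambda>a. run D A k (h @ [(qu, a)])))"
  unfolding run.simps
  by (intro bind_pmf_cong refl)
     (simp add: answer_pmf_def map_pmf_def bind_assoc_pmf bind_return_pmf split: query.split)

locale local_coin_family =
  fixes U :: "nat set" and D :: "(nat \<Rightarrow> bool) \<Rightarrow> nat pmf" and I :: "nat set" and V :: "real set"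
    and coord :: "nat \<Rightarrow> nat set"
  assumes finite_U: "finite U" and finite_I: "finite I" and set_pmf_D: "\<And>\<theta>. set_pmf (D \<theta>) \<subseteq> I"
    and finite_V: "finite V" and pmf_D_in_V: "\<And>\<theta> j. pmf (D \<theta>) j \<in> V"
    and coord_subset: "\<And>j. coord j \<subseteq> U" and card_coord: "\<And>j. card (coord j) \<le> 1"
    and pmf_D_depends: "\<And>j. depends_on (\<lambda>\<theta>. pmf (D \<theta>) j) (coord j)"
begin

definition answers :: "query \<Rightarrow> answer set" where
  "answers qu = (case qu of Samp \<Rightarrow> SampAns ` I | Eval j \<Rightarrow> EvalAns ` V)"

lemma finite_answers: "finite (answers qu)"
  using finite_I finite_V by (simp add: answers_def split: query.split)

lemma set_pmf_answer_pmf: "set_pmf (answer_pmf (D \<theta>) qu) \<subseteq> answers qu"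
  using set_pmf_D pmf_D_in_V by (auto simp: answer_pmf_def answers_def split: query.split)

lemma pmf_answer_pmf_depends:
  "\<exists>C. C \<subseteq> U \<and> card C \<le> 1 \<and> depends_on (\<lambda>\<theta>. pmf (answer_pmf (D \<theta>) qu) a) C"
proof (cases qu)
  case Samp
  show ?thesis
  proof (cases a)
    case (SampAns i)
    have "(\<lambda>\<theta>. pmf (answer_pmf (D \<theta>) qu) a) = (\<lambda>\<theta>. pmf (D \<theta>) i)"
      unfolding Samp SampAns answer_pmf_def by (simp add: pmf_map_inj' inj_def)
    then show ?thesis
      using coord_subset card_coord pmf_D_depends by (intro exI[of _ "coord i"]) simp
  next
    case (EvalAns v)
    have "pmf (answer_pmf (D \<theta>) qu) a = 0" for \<theta>
      by (auto simp: Samp EvalAns answer_pmf_def pmf_eq_0_set_pmf)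
    then show ?thesis
      by (intro exI[of _ "{}"]) (simp add: depends_on_def)
  qed
next
  case (Eval j)
  have "depends_on (\<lambda>\<theta>. pmf (answer_pmf (D \<theta>) qu) a) (coord j)"
    unfolding depends_on_def
  proof (intro allI impI)
    fix \<theta> \<theta>' :: "nat \<Rightarrow> bool"
    assume "\<forall>i\<in>coord j. \<theta> i = \<theta>' i"
    then have "pmf (D \<theta>) j = pmf (D \<theta>') j"
      by (intro depends_onD[OF pmf_D_depends]) auto
    then show "pmf (answer_pmf (D \<theta>) qu) a = pmf (answer_pmf (D \<theta>') qu) a"
      by (simp add: Eval answer_pmf_def)
  qed
  then show ?thesis
    using coord_subset card_coord by blast
qed

abbreviation acc :: "algorithm \<Rightarrow> nat \<Rightarrow> history \<Rightarrow> (nat \<Rightarrow> bool) \<Rightarrow> real" where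
  "acc A k h \<theta> \<equiv> pmf (run (D \<theta>) A k h) True"

lemma acc_Suc:
  "acc A (Suc k) h \<theta> = (\<integral>qu. pmf (answer_pmf (D \<theta>) qu \<bind> (\<lambda>a. run (D \<theta>) A k (h @ [(qu, a)]))) True
       \<partial>measure_pmf (next_query A h))"
  by (simp only: run_Suc_answer_pmf pmf_bind)

lemma pmf_answer_bind:
  "pmf (answer_pmf (D \<theta>) qu \<bind> (\<lambda>a. run (D \<theta>) A k (h @ [(qu, a)]))) True
     = (\<Sum>a\<in>answers qu. pmf (answer_pmf (D \<theta>) qu) a * acc A k (h @ [(qu, a)]) \<theta>)"
  unfolding pmf_bind using finite_answers set_pmf_answer_pmf
  by (subst integral_measure_pmf_real[where A = "answers qu"]) (auto simp: mult.commute)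

text \<open>Each query reveals at most one coin, which costs one more factor \<open>chi2_factor p1 p2\<close>.\<close>
lemma abs_coins_exp_diff_acc_le:
  assumes p: "0 \<le> p1" "p1 \<le> 1" "0 < p2" "p2 < 1" "t > 0"
  shows "T \<subseteq> U \<Longrightarrow> depends_on L T \<Longrightarrow> (\<And>\<theta>. L \<theta> \<ge> 0) \<Longrightarrow>
    \<bar>coins_exp U p1 (\<lambda>\<theta>. L \<theta> * acc A k h \<theta>) - coins_exp U p2 (\<lambda>\<theta>. L \<theta> * acc A k h \<theta>)\<bar>
      \<le> adv_bound U p1 p2 t (k + card T) L"
proof (induction k arbitrary: h T L)
  case 0
  define g where "g = pmf (decide A h) True"
  have "\<bar>coins_exp U p1 (\<lambda>\<theta>. L \<theta> * acc A 0 h \<theta>) - coins_exp U p2 (\<lambda>\<theta>. L \<theta> * acc A 0 h \<theta>)\<bar>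
      = g * \<bar>coins_exp U p1 L - coins_exp U p2 L\<bar>"
    by (simp add: g_def abs_mult right_diff_distrib[symmetric] mult.commute)
  also have "\<dots> \<le> \<bar>coins_exp T p1 L - coins_exp T p2 L\<bar>"
    using finite_U "0.prems" by (simp add: g_def coins_exp_marginal mult_left_le_one_le pmf_le_1)
  also have "\<dots> \<le> adv_bound U p1 p2 t (0 + card T) L"
    using finite_U "0.prems" finite_subset[OF "0.prems"(1) finite_U]
    by (simp add: adv_bound_marginal abs_coins_exp_diff_le p)
  finally show ?case .
next
  case (Suc k)
  obtain c where c: "\<And>qu a. c qu a \<subseteq> U" "\<And>qu a. card (c qu a) \<le> 1"
    "\<And>qu a. depends_on (\<lambda>\<theta>. pmf (answer_pmf (D \<theta>) qu) a) (c qu a)"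
    using pmf_answer_pmf_depends by metis
  let ?w = "\<lambda>qu a \<theta>. pmf (answer_pmf (D \<theta>) qu) a" and ?H = "\<lambda>qu a. acc A k (h @ [(qu, a)])"
  have "\<bar>coins_exp U p1 (\<lambda>\<theta>. L \<theta> * (\<Sum>a\<in>answers qu. ?w qu a \<theta> * ?H qu a \<theta>))
       - coins_exp U p2 (\<lambda>\<theta>. L \<theta> * (\<Sum>a\<in>answers qu. ?w qu a \<theta> * ?H qu a \<theta>))\<bar>
      \<le> adv_bound U p1 p2 t (Suc k + card T) L" for qu
  proof (rule abs_coins_exp_diff_mixture_le[where k = "\<lambda>a. k + card (T \<union> c qu a)"])
    show "k + card (T \<union> c qu a) \<le> Suc k + card T" for a
      using card_Un_le[of T "c qu a"] c(2)[of qu a] by linarith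
    show "\<bar>coins_exp U p1 (\<lambda>\<theta>. L \<theta> * ?w qu a \<theta> * ?H qu a \<theta>)
        - coins_exp U p2 (\<lambda>\<theta>. L \<theta> * ?w qu a \<theta> * ?H qu a \<theta>)\<bar>
        \<le> adv_bound U p1 p2 t (k + card (T \<union> c qu a)) (\<lambda>\<theta>. L \<theta> * ?w qu a \<theta>)" for a
    proof (rule Suc.IH)
      show "T \<union> c qu a \<subseteq> U"
        using Suc.prems(1) c(1) by blast
      show "depends_on (\<lambda>\<theta>. L \<theta> * ?w qu a \<theta>) (T \<union> c qu a)"
        using Suc.prems(2) c(3) by (rule depends_on_mult)
      show "0 \<le> L \<theta> * ?w qu a \<theta>" for \<theta>
        using Suc.prems(3) by simp
    qed
    show "(\<Sum>a\<in>answers qu. ?w qu a \<theta>) = 1" for \<theta>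
      using sum_pmf_eq_1[OF finite_answers set_pmf_answer_pmf] .
  qed (use finite_U finite_answers Suc.prems p in simp_all)
  then show ?case
    unfolding acc_Suc
  proof (intro abs_coins_exp_diff_integral_le finite_U)
    show "0 \<le> L \<theta>" for \<theta>
      by (rule Suc.prems(3))
    show "\<bar>pmf (answer_pmf (D \<theta>) qu \<bind> (\<lambda>a. run (D \<theta>) A k (h @ [(qu, a)]))) True\<bar> \<le> 1"
      for \<theta> qu
      by (simp add: pmf_le_1)
  qed (simp add: pmf_answer_bind)
qed

lemma abs_coins_exp_diff_accept_prob_le:
  assumes "0 \<le> p1" "p1 \<le> 1" "0 < p2" "p2 < 1" "t > 0"
  shows "\<bar>coins_exp U p1 (\<lambda>\<theta>. accept_prob A q (D \<theta>)) - coins_exp U p2 (\<lambda>\<theta>. accept_prob A q (D \<theta>))\<bar>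
    \<le> (chi2_factor p1 p2 ^ q - 1) / (2 * t) + t / 2"
  using abs_coins_exp_diff_acc_le[OF assms, of "{}" "\<lambda>_. 1" A q "[]"]
  by (simp add: accept_prob_def adv_bound_def depends_on_def)

end

text \<open>For \<open>j < n div 2\<close>, coin \<open>\<theta> j\<close> moves the mass \<open>1/n\<close> of the point \<open>2j+2\<close> onto \<open>2j+1\<close>.\<close>
definition perturbed_pmf :: "nat \<Rightarrow> (nat \<Rightarrow> bool) \<Rightarrow> nat \<Rightarrow> real" where
  "perturbed_pmf n \<theta> i =
     (if i \<in> {1..n} then
        (if i \<le> 2 * (n div 2) \<and> \<theta> ((i - 1) div 2) then (if odd i then 2 / n else 0) else 1 / n)
      else 0)"

lemma sum_pairs:
  "(\<Sum>i\<in>{1..2 * (m :: nat)}. f i) = (\<Sum>j<m. f (2 * j + 1) + f (2 * j + 2) :: 'a :: comm_monoid_add)"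
proof (induction m)
  case (Suc m)
  have "{1..2 * Suc m} = insert (2 * m + 2) (insert (2 * m + 1) {1..2 * m})"
    by auto
  with Suc show ?case
    by (simp add: add_ac)
qed simp

lemma sum_split_even_part:
  "(\<Sum>i\<in>{1..n :: nat}. f i)
     = (\<Sum>i\<in>{1..2 * (n div 2)}. f i) + (\<Sum>i\<in>{2 * (n div 2) + 1..n}. f i :: 'a :: comm_monoid_add)"
proof -
  have ivl_split: "{1..n} = {1..2 * (n div 2)} \<union> {2 * (n div 2) + 1..n}"
    by auto
  show ?thesis
    unfolding ivl_split by (rule sum.union_disjoint) auto
qed

lemma perturbed_pmf_pair:
  assumes "j < n div 2"
  shows "perturbed_pmf n \<theta> (Suc (2 * j)) = (if \<theta> j then 2 / n else 1 / n)"
    and "perturbed_pmf n \<theta> (Suc (Suc (2 * j))) = (if \<theta> j then 0 else 1 / n)"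
  using assms by (auto simp: perturbed_pmf_def)

lemma perturbed_pmf_tail: "2 * (n div 2) < i \<Longrightarrow> i \<le> n \<Longrightarrow> perturbed_pmf n \<theta> i = 1 / n"
  by (simp add: perturbed_pmf_def)

lemma sum_perturbed_pmf: "n > 0 \<Longrightarrow> (\<Sum>i\<in>{1..n}. perturbed_pmf n \<theta> i) = 1"
proof -
  assume n: "n > 0"
  let ?m = "n div 2"
  have "(\<Sum>i\<in>{1..n}. perturbed_pmf n \<theta> i) = (\<Sum>j<?m. 2 / n) + (\<Sum>i\<in>{2 * ?m + 1..n}. 1 / n)"
    unfolding sum_split_even_part[of _ n] sum_pairs
    by (intro arg_cong2[where f = "(+)"] sum.cong refl)
       (simp_all add: perturbed_pmf_pair perturbed_pmf_tail)
  also have "\<dots> = (2 * ?m + (n - 2 * ?m)) / n"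
    by (simp add: field_simps)
  finally show ?thesis
    using n by simp
qed

definition perturbed_unif :: "nat \<Rightarrow> (nat \<Rightarrow> bool) \<Rightarrow> nat pmf" where
  "perturbed_unif n \<theta> = embed_pmf (perturbed_pmf n \<theta>)"

lemma pmf_perturbed_unif:
  assumes "n > 0"
  shows "pmf (perturbed_unif n \<theta>) i = perturbed_pmf n \<theta> i"
  unfolding perturbed_unif_def
proof (rule pmf_embed_pmf)
  show "0 \<le> perturbed_pmf n \<theta> i" for i
    by (simp add: perturbed_pmf_def)
  have "(\<integral>\<^sup>+i. ennreal (perturbed_pmf n \<theta> i) \<partial>count_space UNIV)
      = (\<Sum>i\<in>{1..n}. ennreal (perturbed_pmf n \<theta> i))"
    by (rule nn_integral_count_space') (auto simp: perturbed_pmf_def)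
  also have "\<dots> = 1"
    using sum_perturbed_pmf[OF assms] by (simp add: sum_ennreal perturbed_pmf_def)
  finally show "(\<integral>\<^sup>+i. ennreal (perturbed_pmf n \<theta> i) \<partial>count_space UNIV) = 1" .
qed

lemma set_pmf_perturbed_unif: "n > 0 \<Longrightarrow> set_pmf (perturbed_unif n \<theta>) \<subseteq> {1..n}"
  by (auto simp: set_pmf_eq pmf_perturbed_unif perturbed_pmf_def split: if_splits)

definition heads :: "nat \<Rightarrow> (nat \<Rightarrow> bool) \<Rightarrow> nat" where
  "heads m \<theta> = card {j\<in>{..<m}. \<theta> j}"

lemma dtv_perturbed_unif:
  assumes n: "n > 0"
  shows "dtv n (perturbed_unif n \<theta>) (unif n) = heads (n div 2) \<theta> / n"
proof -
  let ?m = "n div 2"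
  have "(\<Sum>i\<in>{1..n}. \<bar>pmf (perturbed_unif n \<theta>) i - pmf (unif n) i\<bar>)
      = (\<Sum>i\<in>{1..n}. \<bar>perturbed_pmf n \<theta> i - 1 / n\<bar>)"
    using n by (intro sum.cong refl) (simp add: pmf_perturbed_unif unif_def)
  also have "\<dots> = (\<Sum>j<?m. if \<theta> j then 2 / n else 0)"
    unfolding sum_split_even_part[of _ n] sum_pairs
    by (auto intro!: sum.cong simp: perturbed_pmf_pair perturbed_pmf_tail)
  also have "\<dots> = heads ?m \<theta> * (2 / n)"
    by (simp add: heads_def sum.inter_filter[symmetric])
  finally show ?thesis
    unfolding dtv_def by simp
qed

definition pair_coord :: "nat \<Rightarrow> nat \<Rightarrow> nat set" where
  "pair_coord n i = (if i \<in> {1..2 * (n div 2)} then {(i - 1) div 2} else {})"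

lemma local_coin_family_perturbed_unif:
  assumes "n > 0"
  shows "local_coin_family {..<n div 2} (perturbed_unif n) {1..n} {0, 1 / n, 2 / n} (pair_coord n)"
proof
  show "set_pmf (perturbed_unif n \<theta>) \<subseteq> {1..n}" for \<theta>
    by (rule set_pmf_perturbed_unif[OF assms])
  show "pmf (perturbed_unif n \<theta>) j \<in> {0, 1 / n, 2 / n}" for \<theta> j
    by (simp add: pmf_perturbed_unif[OF assms] perturbed_pmf_def)
  show "depends_on (\<lambda>\<theta>. pmf (perturbed_unif n \<theta>) j) (pair_coord n j)" for j
    by (auto simp: depends_on_def pmf_perturbed_unif[OF assms] perturbed_pmf_def pair_coord_def)
qed (auto simp: pair_coord_def)

lemma prob_heads:
  assumes "0 \<le> p" "p \<le> 1"
  shows "measure_pmf.prob (coins {..<m} p) {\<theta>. P (heads m \<theta>)}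
       = measure_pmf.prob (binomial_pmf m p) {x. P x}"
proof -
  have "binomial_pmf m p = map_pmf (heads m) (coins {..<m} p)"
    unfolding coins_def heads_def by (rule binomial_pmf_altdef') (use assms in auto)
  then show ?thesis
    by (simp add: vimage_def)
qed

lemma eight_le_exp_4: "8 \<le> exp (4 :: real)"
proof -
  have "3 * 3 \<le> exp (2 :: real) * exp 2"
    using exp_ge_add_one_self[of 2] by (intro mult_mono) auto
  then show ?thesis
    by (simp add: exp_add[symmetric])
qed

lemma binomial_tails_le_eighth:
  fixes e s :: real
  assumes p: "0 \<le> p" "p \<le> 1" and m: "m > 0" and e: "e \<ge> 0" "2 * m \<le> e^2"
  shows "m * p + e \<le> s \<Longrightarrow> measure_pmf.prob (binomial_pmf m p) {x. s < x} \<le> 1/8"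
    and "s \<le> m * p - e \<Longrightarrow> measure_pmf.prob (binomial_pmf m p) {x. x < s} \<le> 1/8"
proof -
  have "exp (-2 * e^2 / m) \<le> exp (-4)"
    using m e by (simp add: field_simps)
  also have "\<dots> \<le> 1/8"
    using eight_le_exp_4 by (simp add: exp_minus field_simps)
  finally have hoeffding: "exp (-2 * e^2 / m) \<le> 1/8" .
  have binomial: "binomial_distribution p"
    using p by (simp add: binomial_distribution_def)
  show "measure_pmf.prob (binomial_pmf m p) {x. s < x} \<le> 1/8" if "m * p + e \<le> s"
  proof -
    have "measure_pmf.prob (binomial_pmf m p) {x. s < x}
        \<le> measure_pmf.prob (binomial_pmf m p) {x. m * p + e \<le> x}"
      using that by (intro measure_pmf.finite_measure_mono) auto
    also have "\<dots> \<le> 1/8"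
      using binomial_distribution.prob_ge[OF binomial m e(1)] hoeffding by simp
    finally show ?thesis .
  qed
  show "measure_pmf.prob (binomial_pmf m p) {x. x < s} \<le> 1/8" if "s \<le> m * p - e"
  proof -
    have "measure_pmf.prob (binomial_pmf m p) {x. x < s}
        \<le> measure_pmf.prob (binomial_pmf m p) {x. x \<le> m * p - e}"
      using that by (intro measure_pmf.finite_measure_mono) auto
    also have "\<dots> \<le> 1/8"
      using binomial_distribution.prob_le[OF binomial m e(1)] hoeffding by simp
    finally show ?thesis .
  qed
qed

context
  fixes A q n eps1 eps2
  assumes tester: "tolerant_unif_tester A q n eps1 eps2" and n: "n > 0"
begin

lemma accept_prob_perturbed_unif:
  shows "heads (n div 2) \<theta> \<le> n * eps1 \<Longrightarrow> 2/3 \<le> accept_prob A q (perturbed_unif n \<theta>)"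
    and "n * eps2 \<le> heads (n div 2) \<theta> \<Longrightarrow> accept_prob A q (perturbed_unif n \<theta>) \<le> 1/3"
proof -
  have "is_dist_on n (perturbed_unif n \<theta>)"
    unfolding is_dist_on_def by (rule set_pmf_perturbed_unif[OF n])
  then have "(dtv n (perturbed_unif n \<theta>) (unif n) \<le> eps1
        \<longrightarrow> 2/3 \<le> accept_prob A q (perturbed_unif n \<theta>)) \<and>
      (eps2 \<le> dtv n (perturbed_unif n \<theta>) (unif n) \<longrightarrow> accept_prob A q (perturbed_unif n \<theta>) \<le> 1/3)"
    using tester unfolding tolerant_unif_tester_def by auto
  then show "heads (n div 2) \<theta> \<le> n * eps1 \<Longrightarrow> 2/3 \<le> accept_prob A q (perturbed_unif n \<theta>)"
    and "n * eps2 \<le> heads (n div 2) \<theta> \<Longrightarrow> accept_prob A q (perturbed_unif n \<theta>) \<le> 1/3"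
    using n by (simp_all add: dtv_perturbed_unif divide_le_eq le_divide_eq mult.commute)
qed

lemma coins_exp_accept_prob_ge:
  assumes "0 \<le> p" "p \<le> 1"
  shows "2/3 * (1 - measure_pmf.prob (binomial_pmf (n div 2) p) {x. n * eps1 < x})
    \<le> coins_exp {..<n div 2} p (\<lambda>\<theta>. accept_prob A q (perturbed_unif n \<theta>))"
proof -
  let ?S = "{\<theta>. n * eps1 < heads (n div 2) \<theta>}"
  have "2/3 - 2/3 * indicator ?S \<theta> \<le> accept_prob A q (perturbed_unif n \<theta>)" for \<theta>
    using accept_prob_perturbed_unif(1)[of \<theta>] by (auto simp: indicator_def accept_prob_def)
  then have "coins_exp {..<n div 2} p (\<lambda>\<theta>. 2/3 - 2/3 * indicator ?S \<theta>)
      \<le> coins_exp {..<n div 2} p (\<lambda>\<theta>. accept_prob A q (perturbed_unif n \<theta>))"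
    by (intro integral_mono) auto
  then show ?thesis
    using prob_heads[OF assms, of "n div 2" "\<lambda>x. n * eps1 < x"] by (simp add: right_diff_distrib)
qed

lemma coins_exp_accept_prob_le:
  assumes "0 \<le> p" "p \<le> 1"
  shows "coins_exp {..<n div 2} p (\<lambda>\<theta>. accept_prob A q (perturbed_unif n \<theta>))
    \<le> 1/3 + measure_pmf.prob (binomial_pmf (n div 2) p) {x. x < n * eps2}"
proof -
  let ?S = "{\<theta>. heads (n div 2) \<theta> < n * eps2}"
  have "accept_prob A q (perturbed_unif n \<theta>) \<le> 1/3 + indicator ?S \<theta>" for \<theta>
    using accept_prob_perturbed_unif(2)[of \<theta>] pmf_le_1[of "run (perturbed_unif n \<theta>) A q []" True]
    by (auto simp: indicator_def accept_prob_def)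
  then have "coins_exp {..<n div 2} p (\<lambda>\<theta>. accept_prob A q (perturbed_unif n \<theta>))
      \<le> coins_exp {..<n div 2} p (\<lambda>\<theta>. 1/3 + indicator ?S \<theta>)"
    by (intro integral_mono) auto
  then show ?thesis
    using prob_heads[OF assms, of "n div 2" "\<lambda>x. x < n * eps2"] by simp
qed

end

lemma chi2_factor_le:
  assumes "0 \<le> p1" "p1 \<le> p2" "1/5 \<le> p2" "p2 \<le> 2/3" "p2 - p1 \<le> d"
  shows "chi2_factor p1 p2 \<le> 1 + 15 * d^2"
proof -
  have "1/5 * (1/3) \<le> p2 * (1 - p2)"
    using assms by (intro mult_mono) auto
  moreover have "(p1 - p2)^2 \<le> d^2"
    using assms by (simp add: power2_commute[of p1] power_mono)
  ultimately have "(p1 - p2)^2 / (p2 * (1 - p2)) \<le> d^2 / (1/15)"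
    by (intro frac_le) auto
  then show ?thesis
    using assms by (simp add: chi2_factor_eq)
qed

lemma one_plus_power_le:
  fixes x :: real
  assumes "0 \<le> x" "real q * x \<le> 1/2"
  shows "(1 + x) ^ q \<le> 1 + 2 * real q * x"
proof -
  have "(1 + x) ^ q \<le> exp x ^ q"
    using assms(1) by (intro power_mono exp_ge_add_one_self) auto
  also have "\<dots> = exp (q * x)"
    by (simp add: exp_of_nat_mult)
  also have "\<dots> \<le> 1 + 2 * (q * x)"
    using exp_bound_lemma[of "q * x"] assms by simp
  finally show ?thesis
    by simp
qed

lemma chi2_factor_power_le:
  assumes "0 \<le> p1" "p1 \<le> p2" "1/5 \<le> p2" "p2 \<le> 2/3" "p2 - p1 \<le> d" "q * d^2 \<le> 1/30"
  shows "chi2_factor p1 p2 ^ q \<le> 1 + 30 * q * d^2"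
proof -
  define x where "x = chi2_factor p1 p2 - 1"
  have x: "0 \<le> x" "x \<le> 15 * d^2"
    using assms chi2_factor_ge_1[of p2 p1] chi2_factor_le[OF assms(1-5)] by (simp_all add: x_def)
  then have "q * x \<le> 15 * (q * d^2)"
    using mult_left_mono[OF x(2), of q] by simp
  then have "(1 + x) ^ q \<le> 1 + 2 * real q * x"
    using x(1) assms(6) by (intro one_plus_power_le) simp_all
  with \<open>q * x \<le> 15 * (q * d^2)\<close> show ?thesis
    by (simp add: x_def)
qed

text \<open>The biases \<open>p\<^sub>1, p\<^sub>2\<close> put the expected distance \<open>heads / n\<close> of the perturbed
  distribution at \<open>\<epsilon>\<^sub>1 - \<delta>\<close> and \<open>\<epsilon>\<^sub>2 + \<delta>\<close>, a margin of \<open>\<delta> = \<epsilon>\<^sub>2 - \<epsilon>\<^sub>1\<close> on either side.\<close>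
lemma bias_bounds:
  fixes eps1 eps2 M N :: real
  assumes eps: "1/10 \<le> eps1" "eps1 < eps2" "eps2 \<le> 1/5" and MN: "0 < M" "2 * M \<le> N" "N \<le> 11/5 * M"
  defines "p1 \<equiv> N * (2 * eps1 - eps2) / M" and "p2 \<equiv> N * (2 * eps2 - eps1) / M"
  shows "0 \<le> p1" "p1 \<le> p2" "1/5 \<le> p2" "p2 \<le> 2/3" "p2 - p1 \<le> 7 * (eps2 - eps1)"
proof -
  have "0 \<le> N * (2 * eps1 - eps2)"
    using eps MN by (intro mult_nonneg_nonneg) auto
  then show "0 \<le> p1"
    unfolding p1_def using MN by simp
  have "p2 - p1 = N * (3 * (eps2 - eps1)) / M"
    unfolding p1_def p2_def using MN by (simp add: field_simps)
  also have "\<dots> \<le> 11/5 * M * (3 * (eps2 - eps1)) / M"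
    using eps MN by (intro divide_right_mono mult_right_mono) auto
  also have "\<dots> \<le> 7 * (eps2 - eps1)"
    using eps MN by simp
  finally show "p2 - p1 \<le> 7 * (eps2 - eps1)" .
  have "0 \<le> N * (3 * (eps2 - eps1)) / M"
    using eps MN by simp
  then show "p1 \<le> p2"
    using \<open>p2 - p1 = N * (3 * (eps2 - eps1)) / M\<close> by simp
  have "2 * M * (1/10) \<le> N * (2 * eps2 - eps1)"
    using eps MN by (intro mult_mono) auto
  then show "1/5 \<le> p2"
    unfolding p2_def using MN by (simp add: field_simps)
  have "N * (2 * eps2 - eps1) \<le> 11/5 * M * (3/10)"
    using eps MN by (intro mult_mono) auto
  then show "p2 \<le> 2/3"
    unfolding p2_def using MN by (simp add: field_simps)
qed

lemma tolerant_tester_query_bound: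
  fixes eps1 eps2 :: real
  assumes eps: "1/10 \<le> eps1" "eps1 < eps2" "eps2 \<le> 1/5"
    and n: "11 \<le> n" "1 \<le> n * (eps2 - eps1)^2"
    and tester: "tolerant_unif_tester A q n eps1 eps2"
  shows "1/150000 \<le> q * (eps2 - eps1)^2"
proof (rule ccontr)
  assume "\<not> ?thesis"
  then have q: "q * (eps2 - eps1)^2 \<le> 1/150000"
    by simp
  define m where "m = n div 2"
  define p1 p2 where "p1 = n * (2 * eps1 - eps2) / m" and "p2 = n * (2 * eps2 - eps1) / m"
  define e where "e = n * (eps2 - eps1)"
  have m: "0 < real m" "2 * real m \<le> n" "real n \<le> 11/5 * m"
    using n(1) unfolding m_def by linarith+
  note p = bias_bounds[OF eps m, folded p1_def p2_def]
  have "(7 * (eps2 - eps1))^2 = 49 * (eps2 - eps1)^2"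
    by (simp only: power_mult_distrib) simp
  then have "q * (7 * (eps2 - eps1))^2 \<le> 1/30" "30 * q * (7 * (eps2 - eps1))^2 \<le> 1/100"
    using q by simp_all
  then have chi2: "chi2_factor p1 p2 ^ q - 1 \<le> 1/100"
    using chi2_factor_power_le[OF p] by fastforce
  interpret local_coin_family "{..<m}" "perturbed_unif n" "{1..n}" "{0, 1 / n, 2 / n}" "pair_coord n"
    unfolding m_def using local_coin_family_perturbed_unif n(1) by simp
  define E where "E p = coins_exp {..<m} p (\<lambda>\<theta>. accept_prob A q (perturbed_unif n \<theta>))" for p
  have "\<bar>E p1 - E p2\<bar> \<le> (chi2_factor p1 p2 ^ q - 1) / (2 * (1/10)) + (1/10) / 2"
    unfolding E_def using p by (intro abs_coins_exp_diff_accept_prob_le) auto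
  also have "\<dots> \<le> 1/10"
    using chi2 by simp
  finally have indistinguishable: "\<bar>E p1 - E p2\<bar> \<le> 1/10" .
  have "real n * 1 \<le> real n * (n * (eps2 - eps1)^2)"
    using n(2) by (intro mult_left_mono) simp_all
  also have "\<dots> = e^2"
    by (simp add: e_def power_mult_distrib power2_eq_square)
  finally have e: "0 \<le> e" "2 * real m \<le> e^2"
    using eps m(2) by (simp_all add: e_def)
  have "m * p1 + e = n * eps1" "n * eps2 = m * p2 - e"
    using m(1) by (simp_all add: p1_def p2_def e_def field_simps)
  then have "measure_pmf.prob (binomial_pmf m p1) {x. n * eps1 < x} \<le> 1/8"
    "measure_pmf.prob (binomial_pmf m p2) {x. x < n * eps2} \<le> 1/8"
    using binomial_tails_le_eighth[OF _ _ _ e] p m(1) by simp_all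
  then have "7/12 \<le> E p1" "E p2 \<le> 11/24"
    using coins_exp_accept_prob_ge[OF tester, of p1] coins_exp_accept_prob_le[OF tester, of p2]
      p n(1)
    by (auto simp: E_def m_def)
  with indistinguishable show False
    by linarith
qed

theorem theorem7:
  shows "\<exists>c a b::real. c > 0 \<and> 0 < a \<and> a < b \<and> b \<le> 1 \<and>
     (\<forall>eps1 eps2. a \<le> eps1 \<longrightarrow> eps1 < eps2 \<longrightarrow> eps2 \<le> b \<longrightarrow>
        (\<exists>N::nat. \<forall>n \<ge> N. \<forall>A q. tolerant_unif_tester A q n eps1 eps2 \<longrightarrow>
            real q \<ge> c / (eps2 - eps1)^2))"
proof -
  have "\<exists>N::nat. \<forall>n \<ge> N. \<forall>A q. tolerant_unif_tester A q n eps1 eps2 \<longrightarrow>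
      real q \<ge> (1/150000) / (eps2 - eps1)^2"
    if eps: "1/10 \<le> eps1" "eps1 < eps2" "eps2 \<le> 1/5" for eps1 eps2 :: real
  proof (intro exI allI impI)
    fix n A q
    assume "max 11 (nat \<lceil>1 / (eps2 - eps1)^2\<rceil>) \<le> n"
      and tester: "tolerant_unif_tester A q n eps1 eps2"
    then have "11 \<le> n" "1 \<le> n * (eps2 - eps1)^2"
      using eps by (auto simp: field_simps)
    then show "(1/150000) / (eps2 - eps1)^2 \<le> q"
      using tolerant_tester_query_bound[OF eps _ _ tester] eps by (simp add: divide_le_eq)
  qed
  then show ?thesis
    by (intro exI[of _ "1/150000"] exI[of _ "1/10"] exI[of _ "1/5"]) auto
qed

end
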